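(* For every finite-rank operator $x=\sum_{j,k}x_{jk}|e_j\rangle\langle e_k|$ (finite sum, $j,k\ge0$), \begin{align*} L(x)&=i\sum_{j,k\ge0}\big(\zeta^+(\omega_{j+1}-\omega_{k+1})+\zeta^-(\omega_j-\omega_k)\big)x_{jk}|e_j\rangle\langle e_k|\\ &\quad+\sum_{j,k\ge0}\Big(\mu\lambda(\omega_k\omega_j)^{1/2}x_{j-1\,k-1}-\tfrac{\mu^2}{2}(\omega_j+\omega_k)x_{jk}\\ &\qquad\qquad+\mu\lambda(\omega_{j+1}\omega_{k+1})^{1/2}x_{j+1\,k+1}-\tfrac{\lambda^2}{2}(\omega_{j+1}+\omega_{k+1})x_{jk}\Big)|e_j\rangle\langle e_k|, \end{align*} with the convention $x_{j-1\,k-1}=0$ if $j=0$ or $k=0$.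
   Context: Let $\mathsf h=\ell^2(\mathbb N)$ with canonical orthonormal basis $(e_n)_{n\ge0}$, $Ne_n=ne_n$. Fix $r>0$, $\omega_n=n(n+r-1)$. On $\mathrm{Dom}(N)$ define $Be_n=\omega_n^{1/2}e_{n-1}$ ($n\ge1$), $Be_0=0$, $B^+e_n=\omega_{n+1}^{1/2}e_{n+1}$. Fix real $0<\lambda<\mu$ and $\zeta^\pm\in\mathbb R$, and put $\nu=\lambda/\mu$. Let $G$ on $\mathrm{Dom}(N^2)$ be $Ge_n=-\big((\tfrac{\lambda^2}{2}+i\zeta^+)\omega_{n+1}+(\tfrac{\mu^2}{2}+i\zeta^-)\omega_n\big)e_n$, $P_t=e^{tG}$, $L_1=\mu B$, $L_2=\lambda B^+$, and let $\mathcal T$ be the minimal quantum dynamical semigroup associated with $G,L_1,L_2$ (the minimal solution of $\langle v,\mathcal T_t(x)u\rangle=\langle P_tv,xP_tu\rangle+\sum_{\ell=1}^2\int_0^t\langle L_\ell P_{t-s}v,\mathcal T_s(x)L_\ell P_{t-s}u\rangle ds$), a quantum Markov semigroup with generator $\mathcal L$, formally $\mathcal L(x)=-\frac{\lambda^2}{2}(BB^+x-2BxB^++xBB^+)-\frac{\mu^2}{2}(B^+Bx-2B^+xB+xB^+B)+i[\zeta^+BB^++\zeta^-B^+B,x]$. Let $\rho=(1-\nu^2)\sum_n\nu^{2n}|e_n\rangle\langle e_n|$ (its invariant state). Let $L_2(\mathsf h)$ be the Hilbert–Schmidt operators with $\langle x,y\rangle=\mathrm{tr}(x^*y)$, $\iota(x)=\rho^{1/4}x\rho^{1/4}$,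 and let $T=(T_t)$ be the strongly continuous contraction semigroup on $L_2(\mathsf h)$ determined by $T_t(\iota(x))=\iota(\mathcal T_t(x))$, with generator $L$; thus $L(\rho^{1/4}x\rho^{1/4})=\rho^{1/4}\mathcal L(x)\rho^{1/4}$ for $x\in\mathrm{Dom}(\mathcal L)$. *)

theory Defs
  imports "HOL-Analysis.Analysis"
begin

text \<open>Operators on h = l2(N) are represented by their matrices w.r.t. the canonical
basis: a :: nat => nat => complex, a j k = <e_j, a e_k>, i.e. a = sum a j k |e_j><e_k|.
Hilbert-Schmidt operators L_2(h) are exactly the square-summable matrices, with
||a||_2^2 = sum_{j,k} |a j k|^2.\<close>

definition omega :: "real \<Rightarrow> nat \<Rightarrow> real" where
  "omega r n = real n * (real n + r - 1)"

text \<open>Diagonal entries of G: G e_n = gdiag n e_n.\<close>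
definition gdiag :: "real \<Rightarrow> real \<Rightarrow> real \<Rightarrow> real \<Rightarrow> real \<Rightarrow> nat \<Rightarrow> complex" where
  "gdiag r lam mu zp zm n =
     - ((complex_of_real (lam^2/2) + \<i> * complex_of_real zp) * complex_of_real (omega r (Suc n))
      + (complex_of_real (mu^2/2) + \<i> * complex_of_real zm) * complex_of_real (omega r n))"

definition pdiag :: "real \<Rightarrow> real \<Rightarrow> real \<Rightarrow> real \<Rightarrow> real \<Rightarrow> real \<Rightarrow> nat \<Rightarrow> complex" where
  "pdiag r lam mu zp zm t n = exp (complex_of_real t * gdiag r lam mu zp zm n)"

text \<open>Iterates of the minimal-semigroup construction, matrix entry (j,k):
  T0_t(x) = P_t^* x P_t,
  T(n+1)_t(x) = P_t^* x P_t + int_0^t sum_l P_{t-s}^* L_l^* T(n)_s(x) L_l P_{t-s} ds,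
with L_1 = mu B, L_2 = lam B^+, so that
  <L_1 e_j, Y L_1 e_k> = mu^2 sqrt(omega_j omega_k) Y_{j-1,k-1} (0 if j=0 or k=0),
  <L_2 e_j, Y L_2 e_k> = lam^2 sqrt(omega_{j+1} omega_{k+1}) Y_{j+1,k+1}.\<close>
fun Tit :: "real \<Rightarrow> real \<Rightarrow> real \<Rightarrow> real \<Rightarrow> real \<Rightarrow> (nat \<Rightarrow> nat \<Rightarrow> complex)
              \<Rightarrow> nat \<Rightarrow> real \<Rightarrow> nat \<Rightarrow> nat \<Rightarrow> complex" where
  "Tit r lam mu zp zm x 0 t j k =
     cnj (pdiag r lam mu zp zm t j) * x j k * pdiag r lam mu zp zm t k"
| "Tit r lam mu zp zm x (Suc n) t j k =
     cnj (pdiag r lam mu zp zm t j) * x j k * pdiag r lam mu zp zm t k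
     + integral {0..t} (\<lambda>s. cnj (pdiag r lam mu zp zm (t - s) j) * pdiag r lam mu zp zm (t - s) k *
         ((if j = 0 \<or> k = 0 then 0
           else complex_of_real (mu^2 * sqrt (omega r j * omega r k)) * Tit r lam mu zp zm x n s (j - 1) (k - 1))
          + complex_of_real (lam^2 * sqrt (omega r (Suc j) * omega r (Suc k))) * Tit r lam mu zp zm x n s (Suc j) (Suc k)))"

text \<open>Minimal quantum dynamical semigroup: T_t(x) = lim_n T(n)_t(x) (weak*-limit,
in particular entrywise limit; for x >= 0 it is the supremum of the increasing iterates).\<close>
definition Tmin :: "real \<Rightarrow> real \<Rightarrow> real \<Rightarrow> real \<Rightarrow> real \<Rightarrow> (nat \<Rightarrow> nat \<Rightarrow> complex)
              \<Rightarrow> real \<Rightarrow> nat \<Rightarrow> nat \<Rightarrow> complex" where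
  "Tmin r lam mu zp zm x t j k = lim (\<lambda>n. Tit r lam mu zp zm x n t j k)"

text \<open>Invariant state rho = (1-nu^2) sum nu^(2n) |e_n><e_n|, nu = lam/mu (diagonal entries).\<close>
definition rhod :: "real \<Rightarrow> real \<Rightarrow> nat \<Rightarrow> real" where
  "rhod lam mu n = (1 - (lam/mu)^2) * (lam/mu)^(2*n)"

text \<open>iota(x) = rho^{1/4} x rho^{1/4} and its inverse on matrices.\<close>
definition iota :: "real \<Rightarrow> real \<Rightarrow> (nat \<Rightarrow> nat \<Rightarrow> complex) \<Rightarrow> nat \<Rightarrow> nat \<Rightarrow> complex" where
  "iota lam mu x j k = complex_of_real ((rhod lam mu j * rhod lam mu k) powr (1/4)) * x j k"

definition iota_inv :: "real \<Rightarrow> real \<Rightarrow> (nat \<Rightarrow> nat \<Rightarrow> complex) \<Rightarrow> nat \<Rightarrow> nat \<Rightarrow> complex" where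
  "iota_inv lam mu y j k = y j k / complex_of_real ((rhod lam mu j * rhod lam mu k) powr (1/4))"

text \<open>The L_2 semigroup T_t(iota x) = iota (T_t x), applied to y = iota(iota_inv y);
this is the action of T_t on y whenever iota_inv y is bounded (e.g. y of finite rank).\<close>
definition TL2 :: "real \<Rightarrow> real \<Rightarrow> real \<Rightarrow> real \<Rightarrow> real \<Rightarrow> real
              \<Rightarrow> (nat \<Rightarrow> nat \<Rightarrow> complex) \<Rightarrow> nat \<Rightarrow> nat \<Rightarrow> complex" where
  "TL2 r lam mu zp zm t y = iota lam mu (Tmin r lam mu zp zm (iota_inv lam mu y) t)"

definition finite_matrix :: "(nat \<Rightarrow> nat \<Rightarrow> complex) \<Rightarrow> bool" where
  "finite_matrix x \<longleftrightarrow> finite {(j, k). x j k \<noteq> 0}"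

definition Lform :: "real \<Rightarrow> real \<Rightarrow> real \<Rightarrow> real \<Rightarrow> real \<Rightarrow> (nat \<Rightarrow> nat \<Rightarrow> complex) \<Rightarrow> nat \<Rightarrow> nat \<Rightarrow> complex" where
  "Lform r lam mu zp zm x j k =
     \<i> * complex_of_real (zp * (omega r (Suc j) - omega r (Suc k)) + zm * (omega r j - omega r k)) * x j k
     + ((if j = 0 \<or> k = 0 then 0
         else complex_of_real (mu * lam * sqrt (omega r k * omega r j)) * x (j - 1) (k - 1))
        - complex_of_real (mu^2 / 2 * (omega r j + omega r k)) * x j k
        + complex_of_real (mu * lam * sqrt (omega r (Suc j) * omega r (Suc k))) * x (Suc j) (Suc k)
        - complex_of_real (lam^2 / 2 * (omega r (Suc j) + omega r (Suc k))) * x j k)"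

end

theory Submission
  imports Defs "HOL-Real_Asymp.Real_Asymp"
begin

(* Put y = iota_inv x, so that the L_2 semigroup acts on x as weight j k * T_t(y) j k with
   weight j k = (rho_j rho_k)^(1/4).  The iterates defining the minimal semigroup are the
   partial sums of a Dyson series for T_t(y), whose terms are time-ordered integrals of the
   jumps against exp (t * eig j k).  Since the jump rates are dominated by the damping rate
   -Re (eig j k), the absolute partial sums stay below sup |y|, and the terms of order at
   least 2 are bounded by damping j k * damping (j+1) (k+1) * sup |y| * t^2, a polynomial
   in j and k.  The terms of order 0 and 1 reproduce x + t L(x) up to O(t^2) on the finitely
   many entries where x and L(x) live, while the decay weight j k ^ 2 = (1 - nu^2) nu^(j+k)
   makes the weighted remainder square-summable.  So the entries of (T_t x - x)/t - L(x) are
   bounded by t times a square-summable matrix. *)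

lemma summable_poly_times_geometric:
  fixes a v :: real
  assumes "0 < a" "0 \<le> v" "v < 1"
  shows "summable (\<lambda>n. (real n + a) ^ p * v ^ n)"
proof -
  have "(\<lambda>n. (real n + a) / (real (Suc n) + a)) \<longlonglongrightarrow> 1"
    using assms(1) by real_asymp
  then have "(\<lambda>n. ((real n + a) / (real (Suc n) + a)) ^ p) \<longlonglongrightarrow> 1 ^ p"
    by (rule tendsto_power)
  then have "(\<lambda>n. norm ((real n + a) ^ p) / norm ((real (Suc n) + a) ^ p)) \<longlonglongrightarrow> 1"
    using assms(1) by (simp add: power_divide abs_of_pos add_pos_nonneg del: of_nat_Suc)
  then have "conv_radius (\<lambda>n. (real n + a) ^ p) = ereal 1"
    by (rule conv_radius_ratio_limit_nonzero[OF refl, rotated]) simp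
  then show ?thesis
    using assms by (intro summable_in_conv_radius) simp
qed

lemma summable_on_product_nonneg:
  fixes f g :: "'a \<Rightarrow> real"
  assumes "f summable_on UNIV" "g summable_on UNIV" "\<And>x. 0 \<le> f x" "\<And>y. 0 \<le> g y"
  shows "(\<lambda>(x, y). f x * g y) summable_on UNIV"
proof -
  have "(\<lambda>(x, y). f x * g y) summable_on Sigma UNIV (\<lambda>_. UNIV)"
  proof (rule summable_on_SigmaI)
    show "((\<lambda>y. case (x, y) of (x, y) \<Rightarrow> f x * g y) has_sum f x * infsum g UNIV) UNIV" for x
      using has_sum_cmult_right[OF has_sum_infsum[OF assms(2)]] by simp
    show "(\<lambda>x. f x * infsum g UNIV) summable_on UNIV"
      by (rule summable_on_cmult_left[OF assms(1)])
  qed (use assms in auto)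
  then show ?thesis by simp
qed

lemma norm_exp_sub_one_sub_le:
  fixes z :: "'a :: {banach, real_normed_field}"
  shows "norm (exp z - 1 - z) \<le> norm z ^ 2 * exp (norm z)"
proof -
  have sums: "(\<lambda>k. z ^ (k + 2) /\<^sub>R fact (k + 2)) sums (exp z - 1 - z)"
    using sums_split_initial_segment[OF exp_converges[of z], of 2] by (simp add: eval_nat_numeral diff_diff_eq)
  have summable: "summable (\<lambda>k. norm (z ^ (k + 2) /\<^sub>R fact (k + 2)))"
    using summable_norm_exp[of z] by (intro summable_ignore_initial_segment)
  have "norm (exp z - 1 - z) \<le> (\<Sum>k. norm (z ^ (k + 2) /\<^sub>R fact (k + 2)))"
    using summable_norm[OF summable] sums by (simp add: sums_iff)
  also have "\<dots> \<le> (\<Sum>k. norm z ^ 2 * (norm z ^ k /\<^sub>R fact k))"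
  proof (rule suminf_le[OF _ summable])
    show "summable (\<lambda>k. norm z ^ 2 * (norm z ^ k /\<^sub>R fact k))"
      by (intro summable_mult summable_exp_generic)
    fix k :: nat
    have "fact k \<le> (fact (k + 2) :: real)"
      by (intro fact_mono) auto
    then have "norm z ^ 2 * norm z ^ k / fact (k + 2) \<le> norm z ^ 2 * norm z ^ k / fact k"
      by (intro divide_left_mono) auto
    moreover have "norm (z ^ (k + 2) /\<^sub>R fact (k + 2)) = norm z ^ 2 * norm z ^ k / fact (k + 2)"
      by (simp only: norm_scaleR power_add norm_mult norm_power) (simp add: field_simps)
    moreover have "norm z ^ 2 * (norm z ^ k /\<^sub>R fact k) = norm z ^ 2 * norm z ^ k / fact k"
      by (simp add: divide_inverse)
    ultimately show "norm (z ^ (k + 2) /\<^sub>R fact (k + 2)) \<le> norm z ^ 2 * (norm z ^ k /\<^sub>R fact k)"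
      by linarith
  qed
  also have "\<dots> = norm z ^ 2 * exp (norm z)"
    using suminf_mult[OF summable_exp_generic[of "norm z"], of "norm z ^ 2"] by (simp add: exp_def)
  finally show ?thesis .
qed

lemma norm_exp_sub_one_sub_le_sq:
  fixes z :: "'a :: {banach, real_normed_field}"
  assumes "norm z \<le> t * C" "0 \<le> t" "t \<le> 1" "0 \<le> C"
  shows "norm (exp z - 1 - z) \<le> t^2 * (C^2 * exp C)"
proof -
  have "norm z ^ 2 \<le> (t * C)^2" "exp (norm z) \<le> exp C"
    using assms mult_left_le_one_le[of C t] by (auto intro: power_mono)
  then have "norm z ^ 2 * exp (norm z) \<le> (t * C)^2 * exp C"
    by (intro mult_mono) auto
  then show ?thesis
    using norm_exp_sub_one_sub_le[of z] by (simp add: power_mult_distrib mult_ac)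
qed

lemma norm_exp_sub_one_le_lin:
  fixes z :: "'a :: {banach, real_normed_field}"
  assumes "norm z \<le> t * C" "0 \<le> t" "t \<le> 1" "0 \<le> C"
  shows "norm (exp z - 1) \<le> t * (C + C^2 * exp C)"
proof -
  have "norm (exp z - 1) \<le> norm z + norm (exp z - 1 - z)"
    using norm_triangle_ineq[of z "exp z - 1 - z"] by simp
  also have "\<dots> \<le> t * C + t^2 * (C^2 * exp C)"
    using assms norm_exp_sub_one_sub_le_sq[OF assms] by linarith
  also have "t^2 * (C^2 * exp C) \<le> t * (C^2 * exp C)"
    using assms by (intro mult_right_mono) (auto simp: power2_eq_square mult_left_le_one_le)
  finally show ?thesis
    by (simp add: algebra_simps)
qed

lemma integral_exp_decay:
  fixes c t :: real
  assumes "0 \<le> t"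
  shows "integral {0..t} (\<lambda>s. exp (- (t - s) * c) * c) = 1 - exp (- t * c)"
proof -
  have "((\<lambda>s. exp (- (t - s) * c) * c) has_integral (exp (- (t - t) * c) - exp (- (t - 0) * c))) {0..t}"
  proof (rule fundamental_theorem_of_calculus[OF assms])
    fix s assume "s \<in> {0..t}"
    have "((\<lambda>s. exp (- (t - s) * c)) has_real_derivative exp (- (t - s) * c) * c) (at s within {0..t})"
      by (auto intro!: derivative_eq_intros)
    then show "((\<lambda>s. exp (- (t - s) * c)) has_vector_derivative exp (- (t - s) * c) * c) (at s within {0..t})"
      by (simp add: has_real_derivative_iff_has_vector_derivative)
  qed
  then have "integral {0..t} (\<lambda>s. exp (- (t - s) * c) * c) = exp (- (t - t) * c) - exp (- (t - 0) * c)"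
    by (rule integral_unique)
  then show ?thesis
    by simp
qed

lemma continuous_on_exp_convolution:
  fixes c :: complex
  assumes "continuous_on {0..b} F"
  shows "continuous_on {0..b} (\<lambda>t. integral {0..t} (\<lambda>s. exp (of_real (t - s) * c) * F s))"
proof -
  have "integral {0..t} (\<lambda>s. exp (of_real (t - s) * c) * F s)
          = exp (of_real t * c) * integral {0..t} (\<lambda>s. exp (- of_real s * c) * F s)" for t
  proof -
    have "(\<lambda>s. exp (of_real (t - s) * c) * F s) = (\<lambda>s. exp (of_real t * c) * (exp (- of_real s * c) * F s))"
      by (simp add: exp_add[symmetric] algebra_simps)
    then show ?thesis
      by simp
  qed
  moreover have "continuous_on {0..b} (\<lambda>t. integral {0..t} (\<lambda>s. exp (- of_real s * c) * F s))"
    by (intro indefinite_integral_continuous_1 integrable_continuous_real continuous_intros assms)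
  ultimately show ?thesis
    by (simp only:) (intro continuous_intros)
qed

lemma norm_integral_exp_sub_one_le:
  fixes a b :: complex
  assumes t: "0 \<le> t" "t \<le> 1" and ab: "cmod a \<le> C" "cmod b \<le> C"
  shows "cmod (integral {0..t} (\<lambda>s. exp (of_real (t - s) * a + of_real s * b) - 1))
           \<le> t^2 * (C + C^2 * exp C)"
proof -
  have C: "0 \<le> C"
    using norm_ge_zero[of a] ab(1) by linarith
  have "cmod (integral {0..t} (\<lambda>s. exp (of_real (t - s) * a + of_real s * b) - 1))
          \<le> integral {0..t} (\<lambda>s. t * (C + C^2 * exp C))"
  proof (rule integral_norm_bound_integral)
    fix s assume s: "s \<in> {0..t}"
    have "cmod (of_real (t - s) * a + of_real s * b) \<le> (t - s) * cmod a + s * cmod b"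
      using s norm_triangle_ineq[of "of_real (t - s) * a" "of_real s * b"]
      by (simp add: norm_mult del: of_real_diff)
    also have "\<dots> \<le> t * C"
      using s ab mult_left_mono[OF ab(1), of "t - s"] mult_left_mono[OF ab(2), of s]
      by (simp add: algebra_simps)
    finally show "cmod (exp (of_real (t - s) * a + of_real s * b) - 1) \<le> t * (C + C^2 * exp C)"
      using t C by (intro norm_exp_sub_one_le_lin) auto
  qed (auto intro!: integrable_continuous_real continuous_intros)
  also have "\<dots> = t^2 * (C + C^2 * exp C)"
    using t by (simp add: power2_eq_square)
  finally show ?thesis .
qed

lemma summable_sq_tendsto_zero_of_linear_bound:
  fixes f :: "real \<Rightarrow> 'a \<Rightarrow> 'b \<Rightarrow> 'c :: real_normed_vector" and b :: "'a \<Rightarrow> 'b \<Rightarrow> real"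
  assumes bound: "\<And>t j k. 0 < t \<Longrightarrow> t \<le> 1 \<Longrightarrow> norm (f t j k) \<le> t * b j k"
    and summable: "(\<lambda>(j, k). (b j k)^2) summable_on UNIV"
  shows "(\<forall>\<^sub>F t in at_right 0. (\<lambda>(j, k). (norm (f t j k))^2) summable_on UNIV)
       \<and> ((\<lambda>t. \<Sum>\<^sub>\<infinity>(j, k). (norm (f t j k))^2) \<longlongrightarrow> 0) (at_right 0)"
proof -
  let ?B = "\<lambda>t. (\<lambda>(j, k). t^2 * (b j k)^2)"
  have small: "\<forall>\<^sub>F t in at_right 0. 0 < t \<and> t \<le> (1::real)"
    unfolding eventually_at_right_field by (rule exI[of _ 1]) auto
  have B_summable: "?B t summable_on UNIV" for t
    using summable_on_cmult_right[OF summable, of "t^2"] by (simp add: case_prod_unfold)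
  have le_B: "(\<lambda>(j, k). (norm (f t j k))^2) p \<le> ?B t p" if "0 < t" "t \<le> 1" for t p
  proof (cases p)
    case (Pair j k)
    show ?thesis
      using power_mono[OF bound[OF that, of j k] norm_ge_zero, where n = 2]
      by (simp add: Pair power_mult_distrib)
  qed
  have summable_t: "(\<lambda>(j, k). (norm (f t j k))^2) summable_on UNIV" if "0 < t" "t \<le> 1" for t
    by (rule summable_on_comparison_test[OF B_summable]) (use le_B[OF that] in auto)
  have "\<forall>\<^sub>F t in at_right 0. (\<Sum>\<^sub>\<infinity>(j, k). (norm (f t j k))^2) \<le> t^2 * (\<Sum>\<^sub>\<infinity>(j, k). (b j k)^2)"
  proof (rule eventually_mono[OF small])
    fix t :: real assume t: "0 < t \<and> t \<le> 1"
    have "(\<Sum>\<^sub>\<infinity>(j, k). (norm (f t j k))^2) \<le> infsum (?B t) UNIV"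
      using t le_B by (intro infsum_mono[OF summable_t B_summable]) auto
    also have "\<dots> = t^2 * (\<Sum>\<^sub>\<infinity>(j, k). (b j k)^2)"
      using infsum_cmult_right'[of "t^2" "\<lambda>(j, k). (b j k)^2"] by (simp add: case_prod_unfold)
    finally show "(\<Sum>\<^sub>\<infinity>(j, k). (norm (f t j k))^2) \<le> t^2 * (\<Sum>\<^sub>\<infinity>(j, k). (b j k)^2)" .
  qed
  moreover have "((\<lambda>t. t^2 * (\<Sum>\<^sub>\<infinity>(j, k). (b j k)^2)) \<longlongrightarrow> 0^2 * (\<Sum>\<^sub>\<infinity>(j, k). (b j k)^2)) (at_right 0)"
    by (intro tendsto_intros)
  moreover have "\<forall>\<^sub>F t in at_right 0. 0 \<le> (\<Sum>\<^sub>\<infinity>(j, k). (norm (f t j k))^2)"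
    by (intro always_eventually allI infsum_nonneg) (simp add: case_prod_unfold)
  ultimately have "((\<lambda>t. \<Sum>\<^sub>\<infinity>(j, k). (norm (f t j k))^2) \<longlongrightarrow> 0) (at_right 0)"
    using tendsto_sandwich[OF _ _ tendsto_const] by simp
  moreover have "\<forall>\<^sub>F t in at_right 0. (\<lambda>(j, k). (norm (f t j k))^2) summable_on UNIV"
    using small by (rule eventually_mono) (use summable_t in auto)
  ultimately show ?thesis by simp
qed

locale lindblad_rates =
  fixes r lam mu zp zm :: real
  assumes r_pos: "0 < r"
begin

lemma omega_nonneg: "0 \<le> omega r n"
  using r_pos by (cases n) (auto simp: omega_def)

lemma omega_mono: "m \<le> n \<Longrightarrow> omega r m \<le> omega r n"
proof -
  have "mono (omega r)"
    unfolding mono_iff_le_Suc using r_pos by (auto simp: omega_def algebra_simps)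
  then show "m \<le> n \<Longrightarrow> omega r m \<le> omega r n"
    by (rule monoD)
qed

lemma omega_Suc_le: "omega r (Suc n) \<le> (1 + r) * (real n + 1)^2"
proof -
  have "omega r (Suc n) = (real n + 1) * (real n + r)"
    by (simp add: omega_def)
  also have "\<dots> \<le> (real n + 1) * ((1 + r) * (real n + 1))"
    using r_pos by (intro mult_left_mono) (auto simp: algebra_simps)
  finally show ?thesis
    by (simp add: power2_eq_square algebra_simps)
qed

text \<open>On the matrix unit \<open>|e_j><e_k|\<close> the map \<open>x \<mapsto> G\<^sup>* x + x G\<close> is multiplication by
  \<open>eig j k\<close>, with real part \<open>- damping j k\<close>, and \<open>jump Y\<close> is the matrix of
  \<open>L\<^sub>1\<^sup>* Y L\<^sub>1 + L\<^sub>2\<^sup>* Y L\<^sub>2\<close>.\<close>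

definition decay :: "nat \<Rightarrow> real" where
  "decay n = lam^2/2 * omega r (Suc n) + mu^2/2 * omega r n"

definition damping :: "nat \<Rightarrow> nat \<Rightarrow> real" where
  "damping j k = decay j + decay k"

definition eig :: "nat \<Rightarrow> nat \<Rightarrow> complex" where
  "eig j k = cnj (gdiag r lam mu zp zm j) + gdiag r lam mu zp zm k"

definition jump_down :: "nat \<Rightarrow> nat \<Rightarrow> real" where
  "jump_down j k = (if j = 0 \<or> k = 0 then 0 else mu^2 * sqrt (omega r j * omega r k))"

definition jump_up :: "nat \<Rightarrow> nat \<Rightarrow> real" where
  "jump_up j k = lam^2 * sqrt (omega r (Suc j) * omega r (Suc k))"

definition jump :: "(nat \<Rightarrow> nat \<Rightarrow> complex) \<Rightarrow> nat \<Rightarrow> nat \<Rightarrow> complex" where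
  "jump Y j k = of_real (jump_down j k) * Y (j - 1) (k - 1) + of_real (jump_up j k) * Y (Suc j) (Suc k)"

lemma decay_nonneg: "0 \<le> decay n"
  unfolding decay_def using omega_nonneg[of n] omega_nonneg[of "Suc n"] by simp

lemma decay_mono: "m \<le> n \<Longrightarrow> decay m \<le> decay n"
  unfolding decay_def using omega_mono[of m n] omega_mono[of "Suc m" "Suc n"]
  by (intro add_mono mult_left_mono) auto

lemma decay_le: "decay n \<le> (lam^2 + mu^2) / 2 * (1 + r) * (real n + 1)^2"
proof -
  have "decay n \<le> (lam^2 + mu^2) / 2 * omega r (Suc n)"
    unfolding decay_def using omega_mono[of n "Suc n"] by (simp add: algebra_simps mult_right_mono)
  also have "\<dots> \<le> (lam^2 + mu^2) / 2 * ((1 + r) * (real n + 1)^2)"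
    by (intro mult_left_mono omega_Suc_le) simp
  finally show ?thesis
    by (simp add: mult.assoc)
qed

lemma damping_nonneg: "0 \<le> damping j k"
  unfolding damping_def using decay_nonneg[of j] decay_nonneg[of k] by simp

lemma damping_mono: "j \<le> j' \<Longrightarrow> k \<le> k' \<Longrightarrow> damping j k \<le> damping j' k'"
  unfolding damping_def by (intro add_mono decay_mono)

lemma damping_le: "damping j k \<le> (lam^2 + mu^2) * (1 + r) * (real j + 1)^2 * (real k + 1)^2"
proof -
  define M where "M = (lam^2 + mu^2) / 2 * (1 + r)"
  have M: "0 \<le> M"
    unfolding M_def using r_pos by simp
  have j: "(real j + 1)^2 \<le> (real j + 1)^2 * (real k + 1)^2"
   and k: "(real k + 1)^2 \<le> (real j + 1)^2 * (real k + 1)^2"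
    using mult_left_mono[of 1 "(real k + 1)^2" "(real j + 1)^2"]
          mult_right_mono[of 1 "(real j + 1)^2" "(real k + 1)^2"] by simp_all
  have "damping j k \<le> M * (real j + 1)^2 + M * (real k + 1)^2"
    unfolding damping_def M_def by (intro add_mono decay_le)
  also have "\<dots> \<le> M * ((real j + 1)^2 * (real k + 1)^2) + M * ((real j + 1)^2 * (real k + 1)^2)"
    using M j k by (intro add_mono mult_left_mono)
  finally show ?thesis
    by (simp add: M_def algebra_simps)
qed

lemma jump_down_nonneg: "0 \<le> jump_down j k"
  unfolding jump_down_def using omega_nonneg[of j] omega_nonneg[of k] by auto

lemma jump_up_nonneg: "0 \<le> jump_up j k"
  unfolding jump_up_def using omega_nonneg[of "Suc j"] omega_nonneg[of "Suc k"] by auto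

lemma jump_down_add_jump_up_le: "jump_down j k + jump_up j k \<le> damping j k"
proof -
  have "mu^2 * sqrt (omega r j * omega r k) \<le> mu^2 * ((omega r j + omega r k) / 2)"
   and "lam^2 * sqrt (omega r (Suc j) * omega r (Suc k)) \<le> lam^2 * ((omega r (Suc j) + omega r (Suc k)) / 2)"
    by (intro mult_left_mono arith_geo_mean_sqrt omega_nonneg; simp)+
  moreover have "0 \<le> mu^2 * ((omega r j + omega r k) / 2)"
    using omega_nonneg[of j] omega_nonneg[of k] by simp
  ultimately show ?thesis
    unfolding jump_down_def jump_up_def damping_def decay_def by (auto simp: algebra_simps)
qed

lemma Re_eig: "Re (eig j k) = - damping j k"
  unfolding eig_def gdiag_def damping_def decay_def by (simp add: algebra_simps)

lemma norm_exp_eig: "cmod (exp (of_real t * eig j k)) = exp (- t * damping j k)"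
  by (simp add: Re_eig)

lemma cnj_pdiag_mult_pdiag:
  "cnj (pdiag r lam mu zp zm t j) * pdiag r lam mu zp zm t k = exp (of_real t * eig j k)"
  unfolding pdiag_def eig_def by (simp add: exp_cnj exp_add[symmetric] algebra_simps)

lemma Tit_0: "Tit r lam mu zp zm y 0 t j k = exp (of_real t * eig j k) * y j k"
  using cnj_pdiag_mult_pdiag[of t j k] by (simp add: ac_simps)

lemma Tit_Suc:
  "Tit r lam mu zp zm y (Suc n) t j k = exp (of_real t * eig j k) * y j k
     + integral {0..t} (\<lambda>s. exp (of_real (t - s) * eig j k) * jump (Tit r lam mu zp zm y n s) j k)"
  using cnj_pdiag_mult_pdiag
  by (cases "j = 0 \<or> k = 0") (auto simp: jump_def jump_down_def jump_up_def ac_simps)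

lemma norm_jump_le:
  "cmod (jump Y j k) \<le> jump_down j k * cmod (Y (j - 1) (k - 1)) + jump_up j k * cmod (Y (Suc j) (Suc k))"
  unfolding jump_def using jump_down_nonneg[of j k] jump_up_nonneg[of j k]
  by (metis (no_types) norm_triangle_ineq norm_mult norm_of_real abs_of_nonneg)

lemma jump_sum: "jump (\<lambda>j k. \<Sum>m\<in>A. Y m j k) j k = (\<Sum>m\<in>A. jump (Y m) j k)"
  unfolding jump_def by (simp add: sum_distrib_left sum.distrib)

lemma continuous_on_jump:
  "(\<And>j k. continuous_on S (\<lambda>s. Y s j k)) \<Longrightarrow> continuous_on S (\<lambda>s. jump (Y s) j k)"
  unfolding jump_def by (intro continuous_intros)

end

locale dyson_series = lindblad_rates +
  fixes y :: "nat \<Rightarrow> nat \<Rightarrow> complex" and X :: real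
  assumes norm_y_le: "\<And>j k. cmod (y j k) \<le> X"
begin

fun dyson :: "nat \<Rightarrow> real \<Rightarrow> nat \<Rightarrow> nat \<Rightarrow> complex" where
  "dyson 0 t j k = exp (of_real t * eig j k) * y j k"
| "dyson (Suc n) t j k = integral {0..t} (\<lambda>s. exp (of_real (t - s) * eig j k) * jump (dyson n s) j k)"

declare dyson.simps [simp del]

lemma X_nonneg: "0 \<le> X"
  using norm_y_le[of 0 0] norm_ge_zero[of "y 0 0"] by linarith

lemma continuous_on_dyson: "continuous_on {0..b} (\<lambda>s. dyson n s j k)"
proof (induction n arbitrary: j k)
  case 0
  show ?case
    unfolding dyson.simps by (intro continuous_intros)
next
  case (Suc n)
  show ?case
    by (simp only: dyson.simps) (intro continuous_on_exp_convolution continuous_on_jump Suc.IH)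
qed

lemma integrable_dyson_convolution:
  "(\<lambda>s. exp (of_real (t - s) * c) * jump (dyson n s) j k) integrable_on {0..t}"
  by (intro integrable_continuous_real continuous_intros continuous_on_jump continuous_on_dyson)

lemma Tit_eq_sum_dyson: "Tit r lam mu zp zm y n t j k = (\<Sum>m\<le>n. dyson m t j k)"
proof (induction n arbitrary: t j k)
  case 0
  show ?case
    by (simp add: Tit_0 dyson.simps del: Tit.simps)
next
  case (Suc n)
  have "Tit r lam mu zp zm y n s = (\<lambda>j k. \<Sum>m\<le>n. dyson m s j k)" for s
    by (intro ext Suc.IH)
  then have "jump (Tit r lam mu zp zm y n s) j k = (\<Sum>m\<le>n. jump (dyson m s) j k)" for s
    by (simp only: jump_sum)
  then have "integral {0..t} (\<lambda>s. exp (of_real (t - s) * eig j k) * jump (Tit r lam mu zp zm y n s) j k)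
      = integral {0..t} (\<lambda>s. \<Sum>m\<le>n. exp (of_real (t - s) * eig j k) * jump (dyson m s) j k)"
    by (simp only: sum_distrib_left)
  also have "\<dots> = (\<Sum>m\<le>n. dyson (Suc m) t j k)"
    unfolding dyson.simps by (intro integral_sum integrable_dyson_convolution) simp
  finally show ?case
    by (simp only: Tit_Suc sum.atMost_Suc_shift dyson.simps(1))
qed

lemma norm_dyson_Suc_le:
  assumes "0 \<le> t"
  shows "cmod (dyson (Suc n) t j k) \<le> integral {0..t} (\<lambda>s. exp (- (t - s) * damping j k) *
           (jump_down j k * cmod (dyson n s (j - 1) (k - 1)) + jump_up j k * cmod (dyson n s (Suc j) (Suc k))))"
  unfolding dyson.simps
proof (rule integral_norm_bound_integral[OF integrable_dyson_convolution])
  show "(\<lambda>s. exp (- (t - s) * damping j k) * (jump_down j k * cmod (dyson n s (j - 1) (k - 1))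
           + jump_up j k * cmod (dyson n s (Suc j) (Suc k)))) integrable_on {0..t}"
    by (intro integrable_continuous_real continuous_intros continuous_on_dyson)
  fix s
  show "cmod (exp (of_real (t - s) * eig j k) * jump (dyson n s) j k)
          \<le> exp (- (t - s) * damping j k) * (jump_down j k * cmod (dyson n s (j - 1) (k - 1))
             + jump_up j k * cmod (dyson n s (Suc j) (Suc k)))"
    unfolding norm_mult norm_exp_eig by (intro mult_left_mono norm_jump_le) simp
qed

text \<open>As the jump rates add up to at most \<open>damping j k\<close>, the bound \<open>c\<close> on the neighbouring
  entries gets integrated against \<open>damping j k * exp (- (t - s) * damping j k)\<close>, whose
  integral over \<open>{0..t}\<close> is \<open>1 - exp (- t * damping j k)\<close>.\<close>
lemma sum_norm_dyson_Suc_le: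
  assumes t: "0 \<le> t"
    and down: "\<And>s. s \<in> {0..t} \<Longrightarrow> (\<Sum>m<N. cmod (dyson (m + p) s (j - 1) (k - 1))) \<le> c"
    and up: "\<And>s. s \<in> {0..t} \<Longrightarrow> (\<Sum>m<N. cmod (dyson (m + p) s (Suc j) (Suc k))) \<le> c"
  shows "(\<Sum>m<N. cmod (dyson (Suc (m + p)) t j k)) \<le> (1 - exp (- t * damping j k)) * c"
proof -
  let ?e = "\<lambda>s. exp (- (t - s) * damping j k)"
  let ?a = "\<lambda>m s. cmod (dyson (m + p) s (j - 1) (k - 1))"
  let ?b = "\<lambda>m s. cmod (dyson (m + p) s (Suc j) (Suc k))"
  have "0 \<le> (\<Sum>m<N. ?a m 0)"
    by (simp add: sum_nonneg)
  with t down[of 0] have c: "0 \<le> c"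
    by simp
  have "(\<Sum>m<N. cmod (dyson (Suc (m + p)) t j k))
          \<le> (\<Sum>m<N. integral {0..t} (\<lambda>s. ?e s * (jump_down j k * ?a m s + jump_up j k * ?b m s)))"
    by (intro sum_mono norm_dyson_Suc_le t)
  also have "\<dots> = integral {0..t} (\<lambda>s. \<Sum>m<N. ?e s * (jump_down j k * ?a m s + jump_up j k * ?b m s))"
    by (intro integral_sum[symmetric] integrable_continuous_real continuous_intros continuous_on_dyson) simp
  also have "\<dots> = integral {0..t} (\<lambda>s. ?e s * (jump_down j k * (\<Sum>m<N. ?a m s) + jump_up j k * (\<Sum>m<N. ?b m s)))"
    by (simp only: sum_distrib_left sum.distrib distrib_left)
  also have "\<dots> \<le> integral {0..t} (\<lambda>s. exp (- (t - s) * damping j k) * damping j k * c)"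
  proof (rule integral_le)
    fix s assume s: "s \<in> {0..t}"
    have "jump_down j k * (\<Sum>m<N. ?a m s) + jump_up j k * (\<Sum>m<N. ?b m s) \<le> jump_down j k * c + jump_up j k * c"
      using s down up by (intro add_mono mult_left_mono jump_down_nonneg jump_up_nonneg) auto
    also have "\<dots> \<le> damping j k * c"
      using jump_down_add_jump_up_le[of j k] c by (simp add: distrib_right[symmetric] mult_right_mono)
    finally show "?e s * (jump_down j k * (\<Sum>m<N. ?a m s) + jump_up j k * (\<Sum>m<N. ?b m s))
                    \<le> ?e s * damping j k * c"
      by (simp add: mult.assoc)
  qed (auto intro!: integrable_continuous_real continuous_intros continuous_on_dyson)
  also have "\<dots> = (1 - exp (- t * damping j k)) * c"
    using integral_exp_decay[OF t, of "damping j k"] by simp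
  finally show ?thesis .
qed

lemma sum_norm_dyson_le: "0 \<le> t \<Longrightarrow> (\<Sum>m<N. cmod (dyson m t j k)) \<le> X"
proof (induction N arbitrary: t j k)
  case 0
  show ?case
    using X_nonneg by simp
next
  case (Suc N)
  have "(\<Sum>m<Suc N. cmod (dyson m t j k)) = cmod (dyson 0 t j k) + (\<Sum>m<N. cmod (dyson (Suc m) t j k))"
    by (rule sum.lessThan_Suc_shift)
  also have "\<dots> \<le> exp (- t * damping j k) * X + (1 - exp (- t * damping j k)) * X"
  proof (rule add_mono)
    show "cmod (dyson 0 t j k) \<le> exp (- t * damping j k) * X"
      unfolding dyson.simps norm_mult norm_exp_eig by (intro mult_left_mono norm_y_le) simp
    show "(\<Sum>m<N. cmod (dyson (Suc m) t j k)) \<le> (1 - exp (- t * damping j k)) * X"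
      using sum_norm_dyson_Suc_le[where p = 0] Suc by simp
  qed
  finally show ?case
    by (simp add: algebra_simps)
qed

lemma summable_norm_dyson: "0 \<le> t \<Longrightarrow> summable (\<lambda>m. cmod (dyson m t j k))"
  by (rule summableI_nonneg_bounded[OF norm_ge_zero sum_norm_dyson_le])

lemma Tmin_eq_suminf_dyson: "0 \<le> t \<Longrightarrow> Tmin r lam mu zp zm y t j k = (\<Sum>m. dyson m t j k)"
proof -
  assume "0 \<le> t"
  then have "(\<lambda>n. \<Sum>m<Suc n. dyson m t j k) \<longlonglongrightarrow> (\<Sum>m. dyson m t j k)"
    by (intro LIMSEQ_Suc summable_LIMSEQ summable_norm_cancel[OF summable_norm_dyson])
  then show ?thesis
    unfolding Tmin_def Tit_eq_sum_dyson lessThan_Suc_atMost by (rule limI)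
qed

lemma one_sub_exp_damping_le: "1 - exp (- t * damping j k) \<le> t * damping j k"
  using exp_ge_add_one_self[of "- t * damping j k"] by simp

lemma sum_norm_dyson_Suc_le_linear:
  assumes t: "0 \<le> t"
  shows "(\<Sum>m<N. cmod (dyson (Suc m) t j k)) \<le> damping j k * X * t"
proof -
  have "(\<Sum>m<N. cmod (dyson (Suc m) t j k)) \<le> (1 - exp (- t * damping j k)) * X"
    using sum_norm_dyson_Suc_le[where p = 0] sum_norm_dyson_le t by simp
  also have "\<dots> \<le> t * damping j k * X"
    by (intro mult_right_mono one_sub_exp_damping_le X_nonneg)
  finally show ?thesis
    by (simp add: mult_ac)
qed

lemma sum_norm_dyson_Suc_Suc_le_quadratic:
  assumes t: "0 \<le> t"
  shows "(\<Sum>m<N. cmod (dyson (Suc (Suc m)) t j k)) \<le> damping j k * damping (Suc j) (Suc k) * X * t^2"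
proof -
  let ?c = "damping (Suc j) (Suc k) * X * t"
  have bound: "damping j' k' * X * s \<le> ?c" if "j' \<le> Suc j" "k' \<le> Suc k" "s \<in> {0..t}" for j' k' s
    using that X_nonneg damping_nonneg by (intro mult_mono damping_mono) (auto intro: mult_nonneg_nonneg)
  have "(\<Sum>m<N. cmod (dyson (Suc (m + 1)) t j k)) \<le> (1 - exp (- t * damping j k)) * ?c"
    using t by (intro sum_norm_dyson_Suc_le order_trans[OF _ bound]) (auto intro: sum_norm_dyson_Suc_le_linear)
  also have "\<dots> \<le> t * damping j k * ?c"
    using t X_nonneg damping_nonneg by (intro mult_right_mono one_sub_exp_damping_le) auto
  finally show ?thesis
    by (simp add: power2_eq_square mult_ac)
qed

lemma norm_Tmin_sub_dyson_01_le:
  assumes t: "0 \<le> t"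
  shows "cmod (Tmin r lam mu zp zm y t j k - (dyson 0 t j k + dyson 1 t j k))
           \<le> damping j k * damping (Suc j) (Suc k) * X * t^2"
proof -
  have summable: "summable (\<lambda>m. cmod (dyson (Suc (Suc m)) t j k))"
    using summable_ignore_initial_segment[OF summable_norm_dyson[OF t, of j k], of 2]
    by (simp only: add_2_eq_Suc')
  have "Tmin r lam mu zp zm y t j k - (dyson 0 t j k + dyson 1 t j k) = (\<Sum>m. dyson (Suc (Suc m)) t j k)"
    using suminf_split_initial_segment[OF summable_norm_cancel[OF summable_norm_dyson[OF t, of j k]], of 2]
    by (simp add: Tmin_eq_suminf_dyson[OF t] add_2_eq_Suc' numeral_2_eq_2)
  also have "cmod \<dots> \<le> (\<Sum>m. cmod (dyson (Suc (Suc m)) t j k))"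
    by (rule summable_norm[OF summable])
  also have "\<dots> \<le> damping j k * damping (Suc j) (Suc k) * X * t^2"
    by (rule suminf_le_const[OF summable sum_norm_dyson_Suc_Suc_le_quadratic[OF t]])
  finally show ?thesis .
qed

end

locale finite_rank_generator = lindblad_rates +
  fixes x :: "nat \<Rightarrow> nat \<Rightarrow> complex"
  assumes lam_pos: "0 < lam" and lam_less_mu: "lam < mu" and finite_x: "finite_matrix x"
begin

definition nu :: real where
  "nu = lam / mu"

lemma nu_pos: "0 < nu" and nu_less_one: "nu < 1"
  using lam_pos lam_less_mu by (auto simp: nu_def)

lemma one_sub_nu_sq_pos: "0 < 1 - nu^2"
  using nu_pos nu_less_one by (simp add: power_less_one_iff)

definition weight :: "nat \<Rightarrow> nat \<Rightarrow> real" where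
  "weight j k = (rhod lam mu j * rhod lam mu k) powr (1/4)"

lemma weight_eq: "weight j k = sqrt ((1 - nu^2) * nu ^ (j + k))"
proof -
  define a where "a = (1 - nu^2) * nu ^ (j + k)"
  have a: "0 < a"
    unfolding a_def using one_sub_nu_sq_pos nu_pos by simp
  have pow2: "nu ^ (2 * n) = nu ^ n * nu ^ n" for n
    by (simp add: mult_2 power_add)
  have "rhod lam mu j * rhod lam mu k = a^2"
    unfolding rhod_def nu_def[symmetric] a_def pow2 power_add power2_eq_square by (simp add: mult_ac)
  also have "\<dots> = a powr 2"
    using powr_realpow[OF a, of 2] by simp
  finally have "rhod lam mu j * rhod lam mu k = a powr 2" .
  then have "weight j k = a powr (1/2)"
    by (simp add: weight_def powr_powr)
  then show ?thesis
    using a by (simp add: powr_half_sqrt a_def)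
qed

lemma weight_pos: "0 < weight j k"
  unfolding weight_eq using one_sub_nu_sq_pos nu_pos by simp

lemma weight_sq: "(weight j k)^2 = (1 - nu^2) * nu ^ (j + k)"
  unfolding weight_eq using one_sub_nu_sq_pos nu_pos by simp

lemma weight_Suc_Suc: "weight (Suc j) (Suc k) = nu * weight j k"
proof -
  have "(1 - nu^2) * nu ^ (Suc j + Suc k) = nu^2 * ((1 - nu^2) * nu ^ (j + k))"
    by (simp add: power2_eq_square)
  then show ?thesis
    unfolding weight_eq using nu_pos by (simp add: real_sqrt_mult)
qed

definition y :: "nat \<Rightarrow> nat \<Rightarrow> complex" where
  "y = iota_inv lam mu x"

definition y_bound :: real where
  "y_bound = (\<Sum>(j, k)\<in>{(j, k). x j k \<noteq> 0}. cmod (y j k))"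

lemma y_eq: "y j k = x j k / of_real (weight j k)"
  unfolding y_def iota_inv_def weight_def ..

lemma x_eq: "x j k = of_real (weight j k) * y j k"
  using weight_pos[of j k] by (simp add: y_eq)

lemma norm_y_le_y_bound: "cmod (y j k) \<le> y_bound"
proof (cases "x j k = 0")
  case True
  then show ?thesis
    by (simp add: y_eq y_bound_def sum_nonneg case_prod_unfold)
next
  case False
  have "(\<lambda>(j, k). cmod (y j k)) (j, k) \<le> (\<Sum>p\<in>{(j, k). x j k \<noteq> 0}. (\<lambda>(j, k). cmod (y j k)) p)"
    by (rule member_le_sum) (use False finite_x in \<open>auto simp: finite_matrix_def\<close>)
  then show ?thesis
    by (simp add: y_bound_def)
qed

sublocale dyson_series r lam mu zp zm y y_bound
  by unfold_locales (rule norm_y_le_y_bound)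

lemma TL2_eq: "TL2 r lam mu zp zm t x j k = of_real (weight j k) * Tmin r lam mu zp zm y t j k"
  unfolding TL2_def iota_def weight_def y_def ..

definition Ldown :: "nat \<Rightarrow> nat \<Rightarrow> complex" where
  "Ldown j k = (if j = 0 \<or> k = 0 then 0
                else of_real (mu * lam * sqrt (omega r k * omega r j)) * x (j - 1) (k - 1))"

definition Lup :: "nat \<Rightarrow> nat \<Rightarrow> complex" where
  "Lup j k = of_real (mu * lam * sqrt (omega r (Suc j) * omega r (Suc k))) * x (Suc j) (Suc k)"

lemma Lform_eq: "Lform r lam mu zp zm x j k = eig j k * x j k + Ldown j k + Lup j k"
  unfolding Lform_def eig_def gdiag_def Ldown_def Lup_def
  by (simp add: complex_eq_iff algebra_simps add_divide_distrib)

lemma finite_matrix_Ldown: "finite_matrix Ldown"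
proof -
  have "{(j, k). Ldown j k \<noteq> 0} \<subseteq> (\<lambda>(j, k). (Suc j, Suc k)) ` {(j, k). x j k \<noteq> 0}"
  proof clarsimp
    fix j k assume "Ldown j k \<noteq> 0"
    then have "j \<noteq> 0" "k \<noteq> 0" "x (j - 1) (k - 1) \<noteq> 0"
      by (auto simp: Ldown_def split: if_splits)
    then show "(j, k) \<in> (\<lambda>(j, k). (Suc j, Suc k)) ` {(j, k). x j k \<noteq> 0}"
      by (intro image_eqI[of _ _ "(j - 1, k - 1)"]) auto
  qed
  then show ?thesis
    using finite_x unfolding finite_matrix_def by (blast intro: finite_subset)
qed

lemma finite_matrix_Lup: "finite_matrix Lup"
proof -
  have "{(j, k). Lup j k \<noteq> 0} \<subseteq> (\<lambda>(j, k). (j - 1, k - 1)) ` {(j, k). x j k \<noteq> 0}"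
    by (force simp: Lup_def)
  then show ?thesis
    using finite_x unfolding finite_matrix_def by (blast intro: finite_subset)
qed

text \<open>Passing from \<open>y\<close> to \<open>x\<close> turns the jump rates \<open>mu\<^sup>2\<close> and \<open>lam\<^sup>2\<close> into \<open>mu * lam\<close>,
  since \<open>weight (Suc j) (Suc k) = nu * weight j k\<close> and \<open>mu\<^sup>2 * nu = mu * lam = lam\<^sup>2 / nu\<close>.\<close>
lemma weight_mult_jump_dyson_0:
  "of_real (weight j k) * jump (dyson 0 s) j k
     = exp (of_real s * eig (j - 1) (k - 1)) * Ldown j k + exp (of_real s * eig (Suc j) (Suc k)) * Lup j k"
proof -
  have mu: "0 < mu"
    using lam_pos lam_less_mu by simp
  have down: "of_real (weight j k) * (of_real (jump_down j k) * dyson 0 s (j - 1) (k - 1))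
                = exp (of_real s * eig (j - 1) (k - 1)) * Ldown j k"
  proof (cases "j = 0 \<or> k = 0")
    case True
    then show ?thesis
      by (auto simp: jump_down_def Ldown_def)
  next
    case False
    then obtain j' k' where jk: "j = Suc j'" "k = Suc k'"
      by (metis not0_implies_Suc)
    show ?thesis
      using weight_pos[of j' k'] mu
      by (simp add: jk jump_down_def Ldown_def dyson.simps weight_Suc_Suc y_eq nu_def
                    mult.commute[of "omega r (Suc k')"] field_simps power2_eq_square)
  qed
  have up: "of_real (weight j k) * (of_real (jump_up j k) * dyson 0 s (Suc j) (Suc k))
              = exp (of_real s * eig (Suc j) (Suc k)) * Lup j k"
    using weight_pos[of j k] mu lam_pos
    by (simp add: jump_up_def Lup_def dyson.simps weight_Suc_Suc y_eq nu_def field_simps power2_eq_square)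
  show ?thesis
    unfolding jump_def distrib_left down up ..
qed

definition eig_bound :: "nat \<Rightarrow> nat \<Rightarrow> real" where
  "eig_bound j k = cmod (eig j k) + cmod (eig (j - 1) (k - 1)) + cmod (eig (Suc j) (Suc k))"

definition first_order_bound :: "nat \<Rightarrow> nat \<Rightarrow> real" where
  "first_order_bound j k =
     (eig_bound j k)^2 * exp (eig_bound j k) * cmod (x j k)
     + (eig_bound j k + (eig_bound j k)^2 * exp (eig_bound j k)) * (cmod (Ldown j k) + cmod (Lup j k))"

definition remainder_bound :: "nat \<Rightarrow> nat \<Rightarrow> real" where
  "remainder_bound j k = weight j k * damping j k * damping (Suc j) (Suc k) * y_bound"

lemma weight_mult_dyson_01_eq:
  fixes t :: real and j k :: nat
  assumes t: "0 \<le> t"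
  defines "E c \<equiv> integral {0..t} (\<lambda>s. exp (of_real (t - s) * eig j k + of_real s * c) - 1)"
  shows "of_real (weight j k) * (dyson 0 t j k + dyson 1 t j k) - x j k - of_real t * Lform r lam mu zp zm x j k
           = x j k * (exp (of_real t * eig j k) - 1 - of_real t * eig j k)
             + E (eig (j - 1) (k - 1)) * Ldown j k + E (eig (Suc j) (Suc k)) * Lup j k"
proof -
  let ?a = "\<lambda>s. of_real (t - s) * eig j k + of_real s * eig (j - 1) (k - 1)"
  let ?b = "\<lambda>s. of_real (t - s) * eig j k + of_real s * eig (Suc j) (Suc k)"
  have "of_real (weight j k) * dyson 1 t j k
          = integral {0..t} (\<lambda>s. exp (of_real (t - s) * eig j k) * (of_real (weight j k) * jump (dyson 0 s) j k))"
    unfolding One_nat_def dyson.simps(2) integral_mult_right[symmetric] by (simp only: mult.left_commute)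
  also have "\<dots> = integral {0..t} (\<lambda>s. exp (?a s) * Ldown j k + exp (?b s) * Lup j k)"
    by (simp only: weight_mult_jump_dyson_0 exp_add distrib_left mult.assoc)
  also have "\<dots> = integral {0..t} (\<lambda>s. (exp (?a s) - 1) * Ldown j k + (exp (?b s) - 1) * Lup j k
                                       + (Ldown j k + Lup j k))"
    by (simp add: algebra_simps)
  also have "\<dots> = E (eig (j - 1) (k - 1)) * Ldown j k + E (eig (Suc j) (Suc k)) * Lup j k
                     + of_real t * (Ldown j k + Lup j k)"
  proof (rule integral_unique)
    have E: "((\<lambda>s. exp (of_real (t - s) * eig j k + of_real s * c) - 1) has_integral E c) {0..t}" for c
      unfolding E_def by (intro integrable_integral integrable_continuous_real continuous_intros)
    show "((\<lambda>s. (exp (?a s) - 1) * Ldown j k + (exp (?b s) - 1) * Lup j k + (Ldown j k + Lup j k))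
            has_integral E (eig (j - 1) (k - 1)) * Ldown j k + E (eig (Suc j) (Suc k)) * Lup j k
                         + of_real t * (Ldown j k + Lup j k)) {0..t}"
      using has_integral_add[OF has_integral_add[OF has_integral_mult_left[OF E] has_integral_mult_left[OF E]]
                                has_integral_const_real[of "Ldown j k + Lup j k" 0 t]] t
      by (simp add: scaleR_conv_of_real)
  qed
  finally show ?thesis
    by (simp add: dyson.simps(1) Lform_eq x_eq[of j k] algebra_simps)
qed

lemma norm_first_order_error_le:
  assumes t: "0 \<le> t" "t \<le> 1"
  shows "cmod (of_real (weight j k) * (dyson 0 t j k + dyson 1 t j k) - x j k - of_real t * Lform r lam mu zp zm x j k)
           \<le> t^2 * first_order_bound j k"
proof -
  define C where "C = eig_bound j k"
  let ?E = "\<lambda>c. integral {0..t} (\<lambda>s. exp (of_real (t - s) * eig j k + of_real s * c) - 1)"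
  let ?e = "exp (of_real t * eig j k) - 1 - of_real t * eig j k"
  have C: "0 \<le> C" "cmod (eig j k) \<le> C" "cmod (eig (j - 1) (k - 1)) \<le> C" "cmod (eig (Suc j) (Suc k)) \<le> C"
    by (auto simp: C_def eig_bound_def)
  have e: "cmod ?e \<le> t^2 * (C^2 * exp C)"
    using t C by (intro norm_exp_sub_one_sub_le_sq) (auto simp: norm_mult intro: mult_left_mono)
  have E: "cmod (?E c) \<le> t^2 * (C + C^2 * exp C)" if "cmod c \<le> C" for c
    using t C(2) that by (rule norm_integral_exp_sub_one_le)
  have "cmod (x j k * ?e + ?E (eig (j - 1) (k - 1)) * Ldown j k + ?E (eig (Suc j) (Suc k)) * Lup j k)
          \<le> cmod (x j k) * cmod ?e + cmod (?E (eig (j - 1) (k - 1))) * cmod (Ldown j k)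
             + cmod (?E (eig (Suc j) (Suc k))) * cmod (Lup j k)"
    using norm_triangle_ineq[of "x j k * ?e + ?E (eig (j - 1) (k - 1)) * Ldown j k" "?E (eig (Suc j) (Suc k)) * Lup j k"]
      norm_triangle_ineq[of "x j k * ?e" "?E (eig (j - 1) (k - 1)) * Ldown j k"]
    by (simp add: norm_mult)
  also have "\<dots> \<le> cmod (x j k) * (t^2 * (C^2 * exp C)) + t^2 * (C + C^2 * exp C) * cmod (Ldown j k)
                   + t^2 * (C + C^2 * exp C) * cmod (Lup j k)"
    by (intro add_mono mult_left_mono mult_right_mono e E C) auto
  also have "\<dots> = t^2 * first_order_bound j k"
    by (simp add: first_order_bound_def C_def algebra_simps)
  finally show ?thesis
    unfolding weight_mult_dyson_01_eq[OF t(1)] .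
qed

lemma norm_generator_error_le:
  assumes t: "0 < t" "t \<le> 1"
  shows "cmod ((TL2 r lam mu zp zm t x j k - x j k) / of_real t - Lform r lam mu zp zm x j k)
           \<le> t * (first_order_bound j k + remainder_bound j k)"
proof -
  let ?first = "of_real (weight j k) * (dyson 0 t j k + dyson 1 t j k) - x j k - of_real t * Lform r lam mu zp zm x j k"
  let ?rest = "Tmin r lam mu zp zm y t j k - (dyson 0 t j k + dyson 1 t j k)"
  have "(TL2 r lam mu zp zm t x j k - x j k) / of_real t - Lform r lam mu zp zm x j k
          = (?first + of_real (weight j k) * ?rest) / of_real t"
    using t by (simp add: TL2_eq field_simps)
  then have "cmod ((TL2 r lam mu zp zm t x j k - x j k) / of_real t - Lform r lam mu zp zm x j k)
               \<le> (cmod ?first + weight j k * cmod ?rest) / t"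
    using t weight_pos[of j k] norm_triangle_ineq[of ?first "of_real (weight j k) * ?rest"]
    by (simp add: norm_divide norm_mult divide_right_mono)
  also have "\<dots> \<le> (t^2 * first_order_bound j k + weight j k * (damping j k * damping (Suc j) (Suc k) * y_bound * t^2)) / t"
    using t weight_pos[of j k] norm_first_order_error_le[of t j k] norm_Tmin_sub_dyson_01_le[of t j k]
    by (intro divide_right_mono add_mono mult_left_mono) auto
  also have "\<dots> = t * (first_order_bound j k + remainder_bound j k)"
    using t by (simp add: remainder_bound_def power2_eq_square field_simps)
  finally show ?thesis .
qed

lemma summable_first_order_bound_sq: "(\<lambda>(j, k). (first_order_bound j k)^2) summable_on UNIV"
proof (rule finite_nonzero_values_imp_summable_on)
  have "{p \<in> UNIV. (\<lambda>(j, k). (first_order_bound j k)^2) p \<noteq> 0}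
          \<subseteq> {(j, k). x j k \<noteq> 0} \<union> {(j, k). Ldown j k \<noteq> 0} \<union> {(j, k). Lup j k \<noteq> 0}"
    by (auto simp: first_order_bound_def)
  then show "finite {p \<in> UNIV. (\<lambda>(j, k). (first_order_bound j k)^2) p \<noteq> 0}"
    using finite_x finite_matrix_Ldown finite_matrix_Lup
    unfolding finite_matrix_def by (blast intro: finite_subset)
qed

lemma summable_remainder_bound_sq: "(\<lambda>(j, k). (remainder_bound j k)^2) summable_on UNIV"
proof -
  define M where "M = (lam^2 + mu^2) * (1 + r)"
  define h where "h n = (real n + 2) ^ 8 * nu ^ n" for n
  have M: "0 \<le> M"
    using r_pos by (simp add: M_def)
  have h: "0 \<le> h n" for n
    using nu_pos by (simp add: h_def)
  have "h summable_on UNIV"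
    using summable_poly_times_geometric[of 2 nu 8] nu_pos nu_less_one h
    by (simp add: summable_on_UNIV_nonneg_real_iff h_def[abs_def])
  then have summable: "(\<lambda>(j, k). ((1 - nu^2) * y_bound^2 * M^4) * (h j * h k)) summable_on UNIV"
    using summable_on_cmult_right[OF summable_on_product_nonneg[OF _ _ h h]]
    by (simp add: case_prod_unfold)
  have le: "(remainder_bound j k)^2 \<le> (1 - nu^2) * y_bound^2 * M^4 * (h j * h k)" for j k
  proof -
    let ?B = "M * (real j + 2)^2 * (real k + 2)^2"
    have "damping (Suc j) (Suc k) \<le> ?B"
      using damping_le[of "Suc j" "Suc k"] by (simp add: M_def add.commute)
    moreover have "damping j k \<le> damping (Suc j) (Suc k)"
      by (rule damping_mono) auto
    ultimately have "damping j k * damping (Suc j) (Suc k) \<le> ?B * ?B"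
      using damping_nonneg M by (intro mult_mono) auto
    then have "damping j k * damping (Suc j) (Suc k) \<le> ?B^2"
      by (simp add: power2_eq_square)
    then have "(damping j k * damping (Suc j) (Suc k))^2 \<le> (?B^2)^2"
      using damping_nonneg by (intro power_mono) auto
    then have "(weight j k)^2 * (damping j k * damping (Suc j) (Suc k))^2 * y_bound^2
                 \<le> (weight j k)^2 * (?B^2)^2 * y_bound^2"
      by (intro mult_right_mono mult_left_mono) auto
    then show ?thesis
      by (simp add: remainder_bound_def weight_sq h_def power_mult_distrib power_add mult_ac
                    power_mult[symmetric])
  qed
  show ?thesis
    by (rule summable_on_comparison_test[OF summable]) (auto simp: case_prod_unfold le)
qed

lemma summable_error_bound_sq:
  "(\<lambda>(j, k). (first_order_bound j k + remainder_bound j k)^2) summable_on UNIV"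
proof (rule summable_on_comparison_test)
  show "(\<lambda>(j, k). 2 * (first_order_bound j k)^2 + 2 * (remainder_bound j k)^2) summable_on UNIV"
    using summable_on_add[OF summable_on_cmult_right[OF summable_first_order_bound_sq, of 2]
                             summable_on_cmult_right[OF summable_remainder_bound_sq, of 2]]
    by (simp add: case_prod_unfold)
  show "(\<lambda>(j, k). (first_order_bound j k + remainder_bound j k)^2) p
          \<le> (\<lambda>(j, k). 2 * (first_order_bound j k)^2 + 2 * (remainder_bound j k)^2) p" for p
    using sum_squares_bound[of "first_order_bound (fst p) (snd p)" "remainder_bound (fst p) (snd p)"]
    by (simp add: case_prod_unfold power2_eq_square algebra_simps)
qed auto

end

theorem lemma6p1:
  fixes r lam mu zp zm :: real and x :: "nat \<Rightarrow> nat \<Rightarrow> complex"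
  assumes "r > 0" and "0 < lam" and "lam < mu" and "finite_matrix x"
  shows "(\<forall>\<^sub>F t in at_right 0.
            (\<lambda>(j, k). (cmod ((TL2 r lam mu zp zm t x j k - x j k) / complex_of_real t
                               - Lform r lam mu zp zm x j k))^2) summable_on UNIV)
       \<and> ((\<lambda>t. \<Sum>\<^sub>\<infinity>(j, k). (cmod ((TL2 r lam mu zp zm t x j k - x j k) / complex_of_real t
                               - Lform r lam mu zp zm x j k))^2) \<longlongrightarrow> 0) (at_right 0)"
proof -
  interpret finite_rank_generator r lam mu zp zm x
    using assms by unfold_locales
  show ?thesis
    by (rule summable_sq_tendsto_zero_of_linear_bound[OF norm_generator_error_le summable_error_bound_sq])
qed

end
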